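(* Let $(E,\star,\rho,(\cdot,\cdot)_-)$ be a pre-symplectic algebroid and let $L_1,L_2\subset E$ be Dirac structures with $E=L_1\oplus L_2$. Then $L_1$ and $L_2$ are left-symmetric algebroids with the restricted multiplication $\star$ and anchors $\rho|_{L_1}$, $\rho|_{L_2}$, and, identifying $L_2$ with $L_1^*$ via $\langle\xi,y\rangle=(\xi,y)_-$ for $\xi\in L_2$, $y\in L_1$, the pair $(L_1,L_2)$ is a left-symmetric bialgebroid.
   Context: A pre-symplectic algebroid is a vector bundle $E\to M$ with a nondegenerate skew-symmetric bilinear form $(\cdot,\cdot)_-$, an $\mathbb R$-bilinear multiplication $\star$ on $\Gamma(E)$ and a bundle map $\rho:E\to TM$ such that for all $e_i\in\Gamma(E)$: (i) $(e_1,e_2,e_3)-(e_2,e_1,e_3)=\frac16DT(e_1,e_2,e_3)$, where $(e_1,e_2,e_3)=e_1\star(e_2\star e_3)-(e_1\star e_2)\star e_3$, $T(e_1,e_2,e_3)=(e_1\star e_2,e_3)_-+(e_1,e_2\star e_3)_--(e_2\star e_1,e_3)_--(e_2,e_1\star e_3)_-$, and $D:C^\infty(M)\to\Gamma(E)$ is defined by $(Df,e)_-=\rho(e)(f)$; (ii) $\rho(e_1)(e_2,e_3)_-=(e_1\star e_2-\frac12D(e_1,e_2)_-,e_3)_-+(e_2,[e_1,e_3]_E)_-$ with $[e_1,e_2]_E=e_1\star e_2-e_2\star e_1$. A subbundle $F\subset E$ is a Dirac structure if it is maximal isotropic for $(\cdot,\cdot)_-$ and $\Gamma(F)$ is closed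 under $\star$. A left-symmetric algebroid is a vector bundle $A\to M$ with an $\mathbb R$-bilinear multiplication $\cdot_A$ on $\Gamma(A)$ with $x\cdot_A(y\cdot_Az)-(x\cdot_Ay)\cdot_Az$ symmetric in $x,y$, and an anchor $a_A$ with $x\cdot_A(fy)=f(x\cdot_Ay)+a_A(x)(f)y$, $(fx)\cdot_Ay=f(x\cdot_Ay)$; $[x,y]_A=x\cdot_Ay-y\cdot_Ax$. Coboundary: $C^{n+1}(A)=\Gamma(\wedge^nA^*\otimes A^* )$, $\delta\varphi(x_1,\dots,x_{n+1})=\sum_{i=1}^n(-1)^{i+1}a_A(x_i)\varphi(\dots,\hat{x_i},\dots,x_{n+1})-\sum_{i=1}^n(-1)^{i+1}\varphi(\dots,\hat{x_i},\dots,x_n,x_i\cdot_Ax_{n+1})+\sum_{i<j\le n}(-1)^{i+j}\varphi([x_i,x_j]_A,\dots,\hat{x_i},\dots,\hat{x_j},\dots,x_{n+1})$; $\mathfrak L_x(y_1\otimes y_2)=(x\cdot_Ay_1)\otimes y_2+y_1\otimes[x,y_2]_A$ on $\Gamma(A\otimes A)$. For left-symmetric algebroids $A,A^*$ on dual bundles, $[\cdot,\cdot]_{A^*},\delta_*,\mathfrak L_\xi$ are the analogous objects for $A^*$; $(A,A^* )$ is a left-symmetric bialgebroid if $\delta[\xi,\eta]_{A^*}=\mathfrak L_\xi\delta\eta-\mathfrak L_\eta\delta\xi$ and $\delta_*[x,y]_A=\mathfrak L_x\delta_*y-\mathfrak L_y\delta_*x$ for all $x,y\in\Gamma(A)$,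 $\xi,\eta\in\Gamma(A^* )$. *)

theory Defs
  imports Main "HOL.Real_Vector_Spaces"
begin

text \<open>Algebraic (Serre--Swan) model.  The type 'f plays the role of the commutative
real algebra C-infinity(M); the type 'e plays the role of the module of sections
Gamma(E), with the C-infinity(M)-action smult.  Vector fields on M are modelled as
real-linear derivations of 'f.  Sub-bundles are modelled by their modules of
sections (subsets of 'e).\<close>

definition module_ax :: "('f::{comm_ring_1,real_algebra_1} \<Rightarrow> 'e::ab_group_add \<Rightarrow> 'e) \<Rightarrow> bool" where
  "module_ax smult \<longleftrightarrow>
     (\<forall>f x y. smult f (x + y) = smult f x + smult f y) \<and>
     (\<forall>f g x. smult (f + g) x = smult f x + smult g x) \<and>
     (\<forall>f g x. smult (f * g) x = smult f (smult g x)) \<and>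
     (\<forall>x. smult 1 x = x)"

definition is_derivation :: "('f::{comm_ring_1,real_algebra_1} \<Rightarrow> 'f) \<Rightarrow> bool" where
  "is_derivation X \<longleftrightarrow>
     (\<forall>f g. X (f + g) = X f + X g) \<and>
     (\<forall>r f. X (of_real r * f) = of_real r * X f) \<and>
     (\<forall>f g. X (f * g) = f * X g + X f * g)"

definition flin_on :: "('f::{comm_ring_1,real_algebra_1} \<Rightarrow> 'e::ab_group_add \<Rightarrow> 'e) \<Rightarrow> 'e set \<Rightarrow> ('e \<Rightarrow> 'f) \<Rightarrow> bool" where
  "flin_on smult A \<phi> \<longleftrightarrow>
     (\<forall>x\<in>A. \<forall>y\<in>A. \<phi> (x + y) = \<phi> x + \<phi> y) \<and>
     (\<forall>f. \<forall>x\<in>A. \<phi> (smult f x) = f * \<phi> x)"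

definition submodule :: "('f::{comm_ring_1,real_algebra_1} \<Rightarrow> 'e::ab_group_add \<Rightarrow> 'e) \<Rightarrow> 'e set \<Rightarrow> bool" where
  "submodule smult A \<longleftrightarrow> 0 \<in> A \<and> (\<forall>x\<in>A. \<forall>y\<in>A. x + y \<in> A) \<and> (\<forall>f. \<forall>x\<in>A. smult f x \<in> A)"

definition rbilinear_on :: "('f::{comm_ring_1,real_algebra_1} \<Rightarrow> 'e::ab_group_add \<Rightarrow> 'e) \<Rightarrow> 'e set \<Rightarrow> ('e \<Rightarrow> 'e \<Rightarrow> 'e) \<Rightarrow> bool" where
  "rbilinear_on smult A m \<longleftrightarrow>
     (\<forall>x\<in>A. \<forall>y\<in>A. \<forall>z\<in>A. m (x + y) z = m x z + m y z \<and> m x (y + z) = m x y + m x z) \<and>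
     (\<forall>r. \<forall>x\<in>A. \<forall>y\<in>A. m (smult (of_real r) x) y = smult (of_real r) (m x y) \<and>
                         m x (smult (of_real r) y) = smult (of_real r) (m x y))"

definition anchor_on :: "('f::{comm_ring_1,real_algebra_1} \<Rightarrow> 'e::ab_group_add \<Rightarrow> 'e) \<Rightarrow> 'e set \<Rightarrow> ('e \<Rightarrow> 'f \<Rightarrow> 'f) \<Rightarrow> bool" where
  "anchor_on smult A a \<longleftrightarrow>
     (\<forall>x\<in>A. is_derivation (a x)) \<and>
     (\<forall>x\<in>A. \<forall>y\<in>A. \<forall>g. a (x + y) g = a x g + a y g) \<and>
     (\<forall>f. \<forall>x\<in>A. \<forall>g. a (smult f x) g = f * a x g)"

definition Dop :: "('e \<Rightarrow> 'e \<Rightarrow> 'f) \<Rightarrow> ('e \<Rightarrow> 'f \<Rightarrow> 'f) \<Rightarrow> 'f \<Rightarrow> 'e" where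
  "Dop pair rho f = (THE e. \<forall>x. pair e x = rho x f)"

definition assoc :: "('e::ab_group_add \<Rightarrow> 'e \<Rightarrow> 'e) \<Rightarrow> 'e \<Rightarrow> 'e \<Rightarrow> 'e \<Rightarrow> 'e" where
  "assoc m x y z = m x (m y z) - m (m x y) z"

definition Tform :: "('e \<Rightarrow> 'e \<Rightarrow> 'f::ab_group_add) \<Rightarrow> ('e \<Rightarrow> 'e \<Rightarrow> 'e) \<Rightarrow> 'e \<Rightarrow> 'e \<Rightarrow> 'e \<Rightarrow> 'f" where
  "Tform pair star e1 e2 e3 =
     pair (star e1 e2) e3 + pair e1 (star e2 e3) - pair (star e2 e1) e3 - pair e2 (star e1 e3)"

definition pre_symplectic_algebroid ::
  "('f::{comm_ring_1,real_algebra_1} \<Rightarrow> 'e::ab_group_add \<Rightarrow> 'e) \<Rightarrow> ('e \<Rightarrow> 'e \<Rightarrow> 'f) \<Rightarrow>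
   ('e \<Rightarrow> 'e \<Rightarrow> 'e) \<Rightarrow> ('e \<Rightarrow> 'f \<Rightarrow> 'f) \<Rightarrow> bool" where
  "pre_symplectic_algebroid smult pair star rho \<longleftrightarrow>
     module_ax smult \<and>
     \<comment> \<open>(.,.)_- is a skew-symmetric C-infinity(M)-bilinear form\<close>
     (\<forall>x y z. pair (x + y) z = pair x z + pair y z) \<and>
     (\<forall>f x y. pair (smult f x) y = f * pair x y) \<and>
     (\<forall>x y. pair x y = - pair y x) \<and>
     \<comment> \<open>nondegenerate: Gamma(E) \<rightarrow> Gamma(E^*) is an isomorphism\<close>
     (\<forall>\<phi>. flin_on smult UNIV \<phi> \<longrightarrow> (\<exists>!e. \<forall>x. pair e x = \<phi> x)) \<and>
     rbilinear_on smult UNIV star \<and>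
     anchor_on smult UNIV rho \<and>
     \<comment> \<open>axiom (i)\<close>
     (\<forall>e1 e2 e3. assoc star e1 e2 e3 - assoc star e2 e1 e3 =
        smult (of_real (1/6)) (Dop pair rho (Tform pair star e1 e2 e3))) \<and>
     \<comment> \<open>axiom (ii)\<close>
     (\<forall>e1 e2 e3. rho e1 (pair e2 e3) =
        pair (star e1 e2 - smult (of_real (1/2)) (Dop pair rho (pair e1 e2))) e3 +
        pair e2 (star e1 e3 - star e3 e1))"

text \<open>Orthogonal complement (of the module of sections) and Dirac structures.
  Maximal isotropic is rendered as L = L^perp.\<close>
definition orth :: "('e \<Rightarrow> 'e \<Rightarrow> 'f::zero) \<Rightarrow> 'e set \<Rightarrow> 'e set" where
  "orth pair L = {e. \<forall>x\<in>L. pair e x = 0}"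

definition dirac_structure ::
  "('f::{comm_ring_1,real_algebra_1} \<Rightarrow> 'e::ab_group_add \<Rightarrow> 'e) \<Rightarrow> ('e \<Rightarrow> 'e \<Rightarrow> 'f) \<Rightarrow>
   ('e \<Rightarrow> 'e \<Rightarrow> 'e) \<Rightarrow> 'e set \<Rightarrow> bool" where
  "dirac_structure smult pair star L \<longleftrightarrow>
     submodule smult L \<and> L = orth pair L \<and> (\<forall>x\<in>L. \<forall>y\<in>L. star x y \<in> L)"

definition direct_sum :: "'e::ab_group_add set \<Rightarrow> 'e set \<Rightarrow> bool" where
  "direct_sum L1 L2 \<longleftrightarrow> L1 \<inter> L2 = {0} \<and> (\<forall>e. \<exists>x\<in>L1. \<exists>y\<in>L2. e = x + y)"

definition left_symmetric_algebroid ::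
  "('f::{comm_ring_1,real_algebra_1} \<Rightarrow> 'e::ab_group_add \<Rightarrow> 'e) \<Rightarrow> 'e set \<Rightarrow>
   ('e \<Rightarrow> 'e \<Rightarrow> 'e) \<Rightarrow> ('e \<Rightarrow> 'f \<Rightarrow> 'f) \<Rightarrow> bool" where
  "left_symmetric_algebroid smult A m a \<longleftrightarrow>
     submodule smult A \<and>
     (\<forall>x\<in>A. \<forall>y\<in>A. m x y \<in> A) \<and>
     rbilinear_on smult A m \<and>
     anchor_on smult A a \<and>
     (\<forall>x\<in>A. \<forall>y\<in>A. \<forall>z\<in>A. assoc m x y z = assoc m y x z) \<and>
     (\<forall>f. \<forall>x\<in>A. \<forall>y\<in>A. m x (smult f y) = smult f (m x y) + smult (a x f) y) \<and>
     (\<forall>f. \<forall>x\<in>A. \<forall>y\<in>A. m (smult f x) y = smult f (m x y))"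

text \<open>pr xi x = <xi, x> for xi in B, x in A; B is identified with A^* via pr.\<close>
definition dual_pairing ::
  "('f::{comm_ring_1,real_algebra_1} \<Rightarrow> 'e::ab_group_add \<Rightarrow> 'e) \<Rightarrow> 'e set \<Rightarrow> 'e set \<Rightarrow>
   ('e \<Rightarrow> 'e \<Rightarrow> 'f) \<Rightarrow> bool" where
  "dual_pairing smult A B pr \<longleftrightarrow>
     (\<forall>\<xi>\<in>B. flin_on smult A (pr \<xi>)) \<and> (\<forall>x\<in>A. flin_on smult B (\<lambda>\<xi>. pr \<xi> x)) \<and>
     (\<forall>\<phi>. flin_on smult A \<phi> \<longrightarrow> (\<exists>!\<xi>. \<xi> \<in> B \<and> (\<forall>x\<in>A. pr \<xi> x = \<phi> x))) \<and>
     (\<forall>\<psi>. flin_on smult B \<psi> \<longrightarrow> (\<exists>!x. x \<in> A \<and> (\<forall>\<xi>\<in>B. pr \<xi> x = \<psi> \<xi>)))"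

text \<open>Coboundary on degree-1 cochains: for eta in Gamma(A^*) = B,
  (delta eta)(x1,x2) = a(x1) <eta,x2> - <eta, x1 . x2>, an element of Gamma(A^* (x) A^*)
  represented as a bilinear function on A x A.\<close>
definition delta1 :: "('e \<Rightarrow> 'f \<Rightarrow> 'f) \<Rightarrow> ('e \<Rightarrow> 'e \<Rightarrow> 'e) \<Rightarrow> ('e \<Rightarrow> 'e \<Rightarrow> 'f::ab_group_add) \<Rightarrow>
   'e \<Rightarrow> 'e \<Rightarrow> 'e \<Rightarrow> 'f" where
  "delta1 a m pr \<eta> x1 x2 = a x1 (pr \<eta> x2) - pr \<eta> (m x1 x2)"

definition Lstar :: "'e set \<Rightarrow> ('e \<Rightarrow> 'e \<Rightarrow> 'e) \<Rightarrow> ('e \<Rightarrow> 'f \<Rightarrow> 'f) \<Rightarrow> 'e set \<Rightarrow>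
   ('e \<Rightarrow> 'e \<Rightarrow> 'f::ab_group_add) \<Rightarrow> 'e \<Rightarrow> 'e \<Rightarrow> 'e" where
  "Lstar A m a B pr x \<xi> = (THE \<zeta>. \<zeta> \<in> B \<and> (\<forall>y\<in>A. pr \<zeta> y = a x (pr \<xi> y) - pr \<xi> (m x y)))"

definition adstar :: "'e set \<Rightarrow> ('e::ab_group_add \<Rightarrow> 'e \<Rightarrow> 'e) \<Rightarrow> ('e \<Rightarrow> 'f \<Rightarrow> 'f) \<Rightarrow> 'e set \<Rightarrow>
   ('e \<Rightarrow> 'e \<Rightarrow> 'f::ab_group_add) \<Rightarrow> 'e \<Rightarrow> 'e \<Rightarrow> 'e" where
  "adstar A m a B pr x \<xi> = (THE \<zeta>. \<zeta> \<in> B \<and> (\<forall>y\<in>A. pr \<zeta> y = a x (pr \<xi> y) - pr \<xi> (m x y - m y x)))"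

text \<open>The operator L_x on Gamma(A (x) A), L_x(y1 (x) y2) = (x . y1) (x) y2 + y1 (x) [x,y2],
  written on elements of Gamma(A (x) A) viewed as bilinear functions Phi on B x B = A^* x A^*.\<close>
definition lieT :: "'e set \<Rightarrow> ('e::ab_group_add \<Rightarrow> 'e \<Rightarrow> 'e) \<Rightarrow> ('e \<Rightarrow> 'f \<Rightarrow> 'f) \<Rightarrow> 'e set \<Rightarrow>
   ('e \<Rightarrow> 'e \<Rightarrow> 'f::ab_group_add) \<Rightarrow> 'e \<Rightarrow> ('e \<Rightarrow> 'e \<Rightarrow> 'f) \<Rightarrow> 'e \<Rightarrow> 'e \<Rightarrow> 'f" where
  "lieT A m a B pr x \<Phi> \<xi>1 \<xi>2 =
     a x (\<Phi> \<xi>1 \<xi>2) - \<Phi> (Lstar A m a B pr x \<xi>1) \<xi>2 - \<Phi> \<xi>1 (adstar A m a B pr x \<xi>2)"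

definition ls_bialgebroid ::
  "('f::{comm_ring_1,real_algebra_1} \<Rightarrow> 'e::ab_group_add \<Rightarrow> 'e) \<Rightarrow>
   'e set \<Rightarrow> ('e \<Rightarrow> 'e \<Rightarrow> 'e) \<Rightarrow> ('e \<Rightarrow> 'f \<Rightarrow> 'f) \<Rightarrow>
   'e set \<Rightarrow> ('e \<Rightarrow> 'e \<Rightarrow> 'e) \<Rightarrow> ('e \<Rightarrow> 'f \<Rightarrow> 'f) \<Rightarrow> ('e \<Rightarrow> 'e \<Rightarrow> 'f) \<Rightarrow> bool" where
  "ls_bialgebroid smult A mA aA B mB aB pr \<longleftrightarrow>
     left_symmetric_algebroid smult A mA aA \<and>
     left_symmetric_algebroid smult B mB aB \<and>
     dual_pairing smult A B pr \<and>
     \<comment> \<open>delta [xi,eta]_{A^*} = L_xi delta eta - L_eta delta xi, as elements of Gamma(A^* (x) A^*)\<close>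
     (\<forall>\<xi>\<in>B. \<forall>\<eta>\<in>B. \<forall>x1\<in>A. \<forall>x2\<in>A.
        delta1 aA mA pr (mB \<xi> \<eta> - mB \<eta> \<xi>) x1 x2 =
        lieT B mB aB A (\<lambda>y \<zeta>. pr \<zeta> y) \<xi> (delta1 aA mA pr \<eta>) x1 x2 -
        lieT B mB aB A (\<lambda>y \<zeta>. pr \<zeta> y) \<eta> (delta1 aA mA pr \<xi>) x1 x2) \<and>
     \<comment> \<open>delta_* [x,y]_A = L_x delta_* y - L_y delta_* x, as elements of Gamma(A (x) A)\<close>
     (\<forall>x\<in>A. \<forall>y\<in>A. \<forall>\<xi>1\<in>B. \<forall>\<xi>2\<in>B.
        delta1 aB mB (\<lambda>y \<zeta>. pr \<zeta> y) (mA x y - mA y x) \<xi>1 \<xi>2 =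
        lieT A mA aA B pr x (delta1 aB mB (\<lambda>y \<zeta>. pr \<zeta> y) y) \<xi>1 \<xi>2 -
        lieT A mA aA B pr y (delta1 aB mB (\<lambda>y \<zeta>. pr \<zeta> y) x) \<xi>1 \<xi>2)"

end

theory Submission
  imports Defs
begin

text \<open>Two identities valid on all of E carry the proof. The cyclic sum of T vanishes by
skew-symmetry, so axiom (i) makes the commutator [\<cdot>,\<cdot>]_E satisfy the Jacobi identity; and
adding two permuted instances of axiom (ii) rewrites it as
\<rho>(a)(b,c)_- = ([a,b]_E,c)_- + (b, a\<star>c - 1/2 D(a,c)_-)_-.
On a Dirac structure the D-terms of both axioms vanish, which gives the left-symmetric
algebroid axioms. Identifying L2 with L1^* through the pairing, the coboundary of \<eta> \<in> L2 is
\<delta>\<eta>(x,y) = ([x,\<eta>]_E,y)_-, and the dual actions of \<xi> \<in> L2 on L1 are the L1-components of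
[\<xi>,x]_E and \<xi>\<star>x - 1/2 D(\<xi>,x)_-. Because L1 and L2 are isotropic, the two projections in each
bialgebroid term recombine into a single pairing, and the first compatibility condition
reduces to the Jacobi identity for \<xi>, \<eta>, x paired with y. Reversing the pairing exchanges
the roles of L1 and L2 and yields the second condition and the other half of the duality.\<close>

lemma submodule_diff:
  assumes "module_ax smult" and "submodule smult L" and "x \<in> L" and "y \<in> L"
  shows "x - y \<in> L"
proof -
  have add_left: "smult (f + g) z = smult f z + smult g z" and one: "smult 1 z = z" for f g z
    using assms(1) unfolding module_ax_def by blast+
  have "smult 0 y = 0"
    using add_left[of 0 0 y] by simp
  then have "y + smult (-1) y = 0"
    using add_left[of 1 "-1" y] by (simp add: one)
  then have "- y = smult (-1) y"
    by (rule minus_unique)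
  with assms(2-4) show ?thesis
    unfolding submodule_def by (metis diff_conv_add_uminus)
qed

lemma dirac_isotropic:
  "dirac_structure smult pair star L \<Longrightarrow> x \<in> L \<Longrightarrow> y \<in> L \<Longrightarrow> pair x y = 0"
  unfolding dirac_structure_def orth_def by blast

lemma dirac_star_closed:
  "dirac_structure smult pair star L \<Longrightarrow> x \<in> L \<Longrightarrow> y \<in> L \<Longrightarrow> star x y \<in> L"
  unfolding dirac_structure_def by blast

lemma of_real_half_add_half: "of_real (1/2) * s + of_real (1/2) * s = (s::'f::real_algebra_1)"
  by (simp flip: distrib_right of_real_add)

section \<open>Pre-symplectic algebroids\<close>

locale pre_symplectic =
  fixes smult :: "'f::{comm_ring_1,real_algebra_1} \<Rightarrow> 'e::ab_group_add \<Rightarrow> 'e"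
    and pair :: "'e \<Rightarrow> 'e \<Rightarrow> 'f"
    and star :: "'e \<Rightarrow> 'e \<Rightarrow> 'e"
    and rho :: "'e \<Rightarrow> 'f \<Rightarrow> 'f"
  assumes pre_symplectic: "pre_symplectic_algebroid smult pair star rho"
begin

abbreviation D :: "'f \<Rightarrow> 'e" where "D \<equiv> Dop pair rho"

abbreviation bracket :: "'e \<Rightarrow> 'e \<Rightarrow> 'e" where "bracket x y \<equiv> star x y - star y x"

lemma module: "module_ax smult"
  using pre_symplectic unfolding pre_symplectic_algebroid_def by blast

lemma smult_add_right: "smult f (x + y) = smult f x + smult f y"
  using module unfolding module_ax_def by blast

lemma additive_smult: "additive (smult f)"
  by unfold_locales (rule smult_add_right)

lemmas smult_zero_right = additive.zero[OF additive_smult]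
lemmas smult_diff_right = additive.diff[OF additive_smult]

lemma pair_add_left: "pair (x + y) z = pair x z + pair y z"
  using pre_symplectic unfolding pre_symplectic_algebroid_def by blast

lemma pair_smult_left: "pair (smult f x) y = f * pair x y"
  using pre_symplectic unfolding pre_symplectic_algebroid_def by blast

lemma pair_skew: "pair x y = - pair y x"
  using pre_symplectic unfolding pre_symplectic_algebroid_def by blast

lemma pair_add_right: "pair z (x + y) = pair z x + pair z y"
  by (metis pair_add_left pair_skew minus_add_distrib)

lemma pair_smult_right: "pair y (smult f x) = f * pair y x"
  by (metis pair_smult_left pair_skew mult_minus_right)

lemma additive_pair_left: "additive (\<lambda>x. pair x z)"
  by unfold_locales (rule pair_add_left)

lemma additive_pair_right: "additive (pair z)"
  by unfold_locales (rule pair_add_right)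

lemmas pair_zero_left = additive.zero[OF additive_pair_left]
lemmas pair_diff_left = additive.diff[OF additive_pair_left]
lemmas pair_diff_right = additive.diff[OF additive_pair_right]
lemmas pair_minus_right = additive.minus[OF additive_pair_right]

lemma pair_nondegenerate: "flin_on smult UNIV \<phi> \<Longrightarrow> \<exists>!e. \<forall>x. pair e x = \<phi> x"
  using pre_symplectic unfolding pre_symplectic_algebroid_def by blast

lemma pair_eqI:
  assumes "\<And>z. pair u z = pair v z"
  shows "u = v"
proof -
  have "flin_on smult UNIV (pair v)"
    by (simp add: flin_on_def pair_add_right pair_smult_right)
  with assms show ?thesis
    using pair_nondegenerate by blast
qed

lemma pair_eqI_right:
  assumes "\<And>z. pair z u = pair z v"
  shows "u = v"
  using assms by (intro pair_eqI) (metis pair_skew)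

lemma star_bilinear: "rbilinear_on smult UNIV star"
  using pre_symplectic unfolding pre_symplectic_algebroid_def by blast

lemma additive_star_left: "additive (\<lambda>x. star x z)"
  by unfold_locales (use star_bilinear in \<open>simp add: rbilinear_on_def\<close>)

lemma additive_star_right: "additive (star z)"
  by unfold_locales (use star_bilinear in \<open>simp add: rbilinear_on_def\<close>)

lemmas star_diff_left = additive.diff[OF additive_star_left]
lemmas star_diff_right = additive.diff[OF additive_star_right]

lemma anchor: "anchor_on smult UNIV rho"
  using pre_symplectic unfolding pre_symplectic_algebroid_def by blast

lemma rho_derivation: "is_derivation (rho x)"
  using anchor unfolding anchor_on_def by blast

lemma rho_add_left: "rho (x + y) g = rho x g + rho y g"
  using anchor unfolding anchor_on_def by blast

lemma rho_smult_left: "rho (smult f x) g = f * rho x g"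
  using anchor unfolding anchor_on_def by blast

lemma rho_mult: "rho x (f * g) = f * rho x g + rho x f * g"
  using rho_derivation unfolding is_derivation_def by blast

lemma additive_rho: "additive (rho x)"
  by unfold_locales (use rho_derivation in \<open>simp add: is_derivation_def\<close>)

lemmas rho_zero = additive.zero[OF additive_rho]
lemmas rho_minus = additive.minus[OF additive_rho]

lemma pair_D_left: "pair (D f) x = rho x f"
proof -
  have "flin_on smult UNIV (\<lambda>x. rho x f)"
    by (simp add: flin_on_def rho_add_left rho_smult_left)
  then have "\<exists>!e. \<forall>x. pair e x = rho x f"
    by (rule pair_nondegenerate)
  then show ?thesis
    unfolding Dop_def by (rule theI'[THEN spec])
qed

lemma pair_D_right: "pair x (D f) = - rho x f"
  by (metis pair_D_left pair_skew)

lemma D_zero: "D 0 = 0"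
  by (rule pair_eqI) (simp add: pair_D_left rho_zero pair_zero_left)

lemma additive_D: "additive D"
  by unfold_locales (rule pair_eqI, simp add: pair_D_left pair_add_left additive.add[OF additive_rho])

abbreviation ostar :: "'e \<Rightarrow> 'e \<Rightarrow> 'e" where
  "ostar a c \<equiv> star a c - smult (of_real (1/2)) (D (pair a c))"

lemma assoc_antisym: "assoc star a b c - assoc star b a c = smult (of_real (1/6)) (D (Tform pair star a b c))"
  using pre_symplectic unfolding pre_symplectic_algebroid_def by blast

lemma rho_pair: "rho a (pair b c) = pair (ostar a b) c + pair b (bracket a c)"
  using pre_symplectic unfolding pre_symplectic_algebroid_def by blast

lemma rho_pair_expanded:
  "rho a (pair b c) = pair (star a b) c - of_real (1/2) * rho c (pair a b) + pair b (bracket a c)"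
  using rho_pair[of a b c] by (simp add: pair_diff_left pair_smult_left pair_D_left)

lemma Tform_cyclic_sum: "Tform pair star a b c + Tform pair star b c a + Tform pair star c a b = 0"
proof -
  have flip: "pair x (star y z) = - pair (star y z) x" for x y z
    by (rule pair_skew)
  show ?thesis
    unfolding Tform_def flip by (simp add: algebra_simps)
qed

lemma jacobi: "bracket (bracket a b) c + bracket (bracket b c) a + bracket (bracket c a) b = 0"
proof -
  have "bracket (bracket a b) c + bracket (bracket b c) a + bracket (bracket c a) b =
        (assoc star b a c - assoc star a b c) + (assoc star a c b - assoc star c a b) +
        (assoc star c b a - assoc star b c a)"
    by (simp add: assoc_def star_diff_left star_diff_right algebra_simps)
  also have "\<dots> = smult (of_real (1/6))
      (D (Tform pair star b a c + Tform pair star a c b + Tform pair star c b a))"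
    by (simp only: assoc_antisym additive.add[OF additive_D] smult_add_right)
  also have "\<dots> = 0"
    by (simp only: Tform_cyclic_sum D_zero smult_zero_right)
  finally show ?thesis .
qed

lemma bracket_bracket: "bracket x (bracket a b) = bracket a (bracket x b) - bracket b (bracket x a)"
  using jacobi[of a b x] by (simp add: star_diff_left star_diff_right algebra_simps)

lemma pair_star_symmetric:
  "pair (star b a) c + pair (star c a) b = of_real (1/2) * (rho c (pair a b) + rho b (pair a c))"
    (is "?P = of_real (1/2) * ?S")
proof -
  have skew_rho: "rho x (pair y z) = - rho x (pair z y)" for x y z
    by (metis pair_skew rho_minus)
  have "rho c (pair a b) + rho b (pair a c) =
        (pair (star c a) b - of_real (1/2) * rho b (pair c a) + pair a (bracket c b)) +
        (pair (star b a) c - of_real (1/2) * rho c (pair b a) + pair a (bracket b c))"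
    by (rule arg_cong2[where f = "(+)"]) (rule rho_pair_expanded)+
  also have "\<dots> = pair (star b a) c + pair (star c a) b +
      of_real (1/2) * (rho c (pair a b) + rho b (pair a c))"
    by (simp add: skew_rho[of b c a] skew_rho[of c b a] pair_diff_right algebra_simps)
  finally have "?S - of_real (1/2) * ?S = ?P"
    by (metis add_diff_cancel)
  then show ?thesis
    by (metis of_real_half_add_half add_diff_cancel)
qed

lemma rho_pair_bracket: "rho a (pair b c) = pair (bracket a b) c + pair b (ostar a c)"
proof -
  have sym: "pair (star b a) c =
      of_real (1/2) * rho c (pair a b) + of_real (1/2) * rho b (pair a c) - pair (star c a) b"
    using pair_star_symmetric[of b a c] by (simp add: algebra_simps)
  show ?thesis
    unfolding rho_pair_expanded[of a b c]
    by (simp add: sym pair_skew[of b "star c a"] pair_diff_left pair_diff_right pair_smult_right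
        pair_D_right algebra_simps)
qed

lemma rho_pair_isotropic:
  assumes "pair a b = 0"
  shows "rho a (pair b c) = pair (star a b) c + pair b (bracket a c)"
  using rho_pair[of a b c] by (simp add: assms D_zero smult_zero_right)

lemma delta1_isotropic_bracket:
  assumes "pair x y = 0"
  shows "delta1 rho star pair e x y = pair (bracket x e) y"
proof -
  have "rho x (pair e y) = - rho x (pair y e)"
    by (metis pair_skew rho_minus)
  then show ?thesis
    unfolding delta1_def rho_pair_isotropic[OF assms]
    by (simp add: pair_skew[of e "star x y"] pair_skew[of y "bracket x e"])
qed

lemma delta1_isotropic_ostar:
  assumes "pair x y = 0"
  shows "delta1 rho star pair e x y = pair x (ostar e y)"
proof -
  have "pair (bracket e x) y + pair x (ostar e y) = 0"
    using rho_pair_bracket[of e x y] by (simp add: assms rho_zero)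
  then show ?thesis
    unfolding delta1_isotropic_bracket[OF assms] by (simp add: pair_diff_left algebra_simps)
qed

subsection \<open>Dirac structures\<close>

lemma star_smult_right_isotropic:
  assumes "pair x y = 0"
  shows "star x (smult f y) = smult f (star x y) + smult (rho x f) y"
proof (rule pair_eqI)
  fix z
  have "pair (star x (smult f y)) z = rho x (pair (smult f y) z) - pair (smult f y) (bracket x z)"
    using rho_pair_isotropic[of x "smult f y" z] by (simp add: assms pair_smult_right)
  also have "\<dots> = f * (rho x (pair y z) - pair y (bracket x z)) + rho x f * pair y z"
    by (simp add: pair_smult_left rho_mult algebra_simps)
  also have "\<dots> = pair (smult f (star x y) + smult (rho x f) y) z"
    by (simp add: rho_pair_isotropic[OF assms] pair_add_left pair_smult_left)
  finally show "pair (star x (smult f y)) z = pair (smult f (star x y) + smult (rho x f) y) z" .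
qed

lemma star_smult_left_isotropic:
  assumes "pair x y = 0"
  shows "star (smult f x) y = smult f (star x y)"
proof (rule pair_eqI_right)
  fix w
  have yx: "pair y x = 0"
    using assms pair_skew[of y x] by simp
  have "pair w (star (smult f x) y) =
      pair (ostar y w) (smult f x) + pair w (star y (smult f x)) - rho y (pair w (smult f x))"
    using rho_pair[of y w "smult f x"] by (simp add: pair_diff_right algebra_simps)
  also have "\<dots> = f * (pair (ostar y w) x + pair w (star y x) - rho y (pair w x))"
    by (simp add: star_smult_right_isotropic[OF yx] pair_smult_right pair_add_right rho_mult
        algebra_simps)
  also have "\<dots> = pair w (smult f (star x y))"
    by (simp add: rho_pair[of y w x] pair_diff_right pair_smult_right)
  finally show "pair w (star (smult f x) y) = pair w (smult f (star x y))" .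
qed

lemma dirac_left_symmetric_algebroid:
  assumes L: "dirac_structure smult pair star L"
  shows "left_symmetric_algebroid smult L star rho"
  unfolding left_symmetric_algebroid_def
proof (intro conjI ballI allI)
  show "submodule smult L"
    using L unfolding dirac_structure_def by blast
  show "rbilinear_on smult L star"
    using star_bilinear unfolding rbilinear_on_def by blast
  show "anchor_on smult L rho"
    using anchor unfolding anchor_on_def by blast
  fix x y assume xy: "x \<in> L" "y \<in> L"
  then show "star x y \<in> L"
    by (rule dirac_star_closed[OF L])
  fix f
  show "star x (smult f y) = smult f (star x y) + smult (rho x f) y"
    by (rule star_smult_right_isotropic) (rule dirac_isotropic[OF L xy])
  show "star (smult f x) y = smult f (star x y)"
    by (rule star_smult_left_isotropic) (rule dirac_isotropic[OF L xy])
next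
  fix x y z assume "x \<in> L" "y \<in> L" "z \<in> L"
  then have "Tform pair star x y z = 0"
    unfolding Tform_def by (simp add: dirac_isotropic[OF L] dirac_star_closed[OF L])
  then show "assoc star x y z = assoc star y x z"
    using assoc_antisym[of x y z] by (simp add: D_zero smult_zero_right)
qed

lemma Dop_flip: "Dop (\<lambda>a b. pair b a) rho f = - D f"
  unfolding Dop_def[of "\<lambda>a b. pair b a"]
proof (rule the_equality)
  show "\<forall>x. pair x (- D f) = rho x f"
    by (simp add: pair_minus_right pair_D_right)
  fix e assume "\<forall>x. pair x e = rho x f"
  then show "e = - D f"
    by (intro pair_eqI_right) (simp add: pair_minus_right pair_D_right)
qed

lemma pre_symplectic_flip: "pre_symplectic_algebroid smult (\<lambda>a b. pair b a) star rho"
  unfolding pre_symplectic_algebroid_def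
proof (intro conjI allI impI)
  show "module_ax smult" by (rule module)
  show "rbilinear_on smult UNIV star" by (rule star_bilinear)
  show "anchor_on smult UNIV rho" by (rule anchor)
  fix x y z :: 'e and f :: 'f
  show "pair z (x + y) = pair z x + pair z y" by (rule pair_add_right)
  show "pair y (smult f x) = f * pair y x" by (rule pair_smult_right)
  show "pair y x = - pair x y" by (rule pair_skew)
next
  fix \<phi> :: "'e \<Rightarrow> 'f" assume "flin_on smult UNIV \<phi>"
  then have "flin_on smult UNIV (\<lambda>x. - \<phi> x)"
    unfolding flin_on_def by simp
  then have "\<exists>!e. \<forall>x. pair e x = - \<phi> x"
    by (rule pair_nondegenerate)
  moreover have "(\<forall>x. pair e x = - \<phi> x) \<longleftrightarrow> (\<forall>x. pair x e = \<phi> x)" for e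
    by (metis pair_skew minus_minus)
  ultimately show "\<exists>!e. \<forall>x. pair x e = \<phi> x"
    by simp
next
  fix a b c :: 'e
  have "Tform (\<lambda>a b. pair b a) star a b c = - Tform pair star a b c"
    unfolding Tform_def
    by (simp add: pair_skew[of c "star a b"] pair_skew[of "star b c" a] pair_skew[of c "star b a"]
        pair_skew[of "star a c" b])
  then show "assoc star a b c - assoc star b a c =
      smult (of_real (1/6)) (Dop (\<lambda>a b. pair b a) rho (Tform (\<lambda>a b. pair b a) star a b c))"
    by (simp add: Dop_flip assoc_antisym additive.minus[OF additive_D])
  have "star a b - smult (of_real (1/2)) (Dop (\<lambda>a b. pair b a) rho (pair b a)) = ostar a b"
    by (simp add: Dop_flip pair_skew[of b a] additive.minus[OF additive_D])
  moreover have "rho a (pair c b) = - rho a (pair b c)"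
    by (metis pair_skew rho_minus)
  ultimately show "rho a (pair c b) =
      pair c (star a b - smult (of_real (1/2)) (Dop (\<lambda>a b. pair b a) rho (pair b a))) +
      pair (bracket a c) b"
    by (simp add: rho_pair pair_skew[of c "ostar a b"] pair_skew[of "bracket a c" b])
qed

lemma dirac_flip:
  assumes "dirac_structure smult pair star L"
  shows "dirac_structure smult (\<lambda>a b. pair b a) star L"
proof -
  have "orth (\<lambda>a b. pair b a) L = orth pair L"
    unfolding orth_def by (metis (no_types, opaque_lifting) pair_skew neg_equal_0_iff_equal)
  with assms show ?thesis
    unfolding dirac_structure_def by simp
qed

end

section \<open>Complementary Dirac structures\<close>

definition projection :: "'e::ab_group_add set \<Rightarrow> 'e set \<Rightarrow> 'e \<Rightarrow> 'e" where
  "projection L1 L2 e = (THE u. u \<in> L1 \<and> e - u \<in> L2)"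

locale complementary_dirac = pre_symplectic smult pair star rho
  for smult :: "'f::{comm_ring_1,real_algebra_1} \<Rightarrow> 'e::ab_group_add \<Rightarrow> 'e"
    and pair star rho +
  fixes L1 L2 :: "'e set"
  assumes dirac1: "dirac_structure smult pair star L1"
    and dirac2: "dirac_structure smult pair star L2"
    and direct_sum: "direct_sum L1 L2"
begin

abbreviation proj :: "'e \<Rightarrow> 'e" where "proj \<equiv> projection L1 L2"

lemma complementary_dirac_flip: "complementary_dirac smult (\<lambda>a b. pair b a) star rho L2 L1"
proof -
  have "direct_sum L2 L1"
    using direct_sum unfolding direct_sum_def by (metis Int_commute add.commute)
  then show ?thesis
    by (simp add: complementary_dirac_def complementary_dirac_axioms_def pre_symplectic_def
        pre_symplectic_flip dirac_flip dirac1 dirac2)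
qed

lemma submodule1: "submodule smult L1" and submodule2: "submodule smult L2"
  using dirac1 dirac2 unfolding dirac_structure_def by blast+

lemma diff_mem1: "x \<in> L1 \<Longrightarrow> y \<in> L1 \<Longrightarrow> x - y \<in> L1"
  and diff_mem2: "x \<in> L2 \<Longrightarrow> y \<in> L2 \<Longrightarrow> x - y \<in> L2"
  using submodule_diff[OF module submodule1] submodule_diff[OF module submodule2] by blast+

lemma projection_ex1: "\<exists>!u. u \<in> L1 \<and> e - u \<in> L2"
proof -
  obtain a b where "a \<in> L1" "b \<in> L2" "e = a + b"
    using direct_sum unfolding direct_sum_def by blast
  then have "a \<in> L1 \<and> e - a \<in> L2"
    by simp
  moreover have "u = u'" if "u \<in> L1 \<and> e - u \<in> L2" "u' \<in> L1 \<and> e - u' \<in> L2" for u u'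
  proof -
    have "u - u' \<in> L1" and "(e - u') - (e - u) \<in> L2"
      using that diff_mem1 diff_mem2 by blast+
    then have "u - u' \<in> L1 \<inter> L2"
      by simp
    then show "u = u'"
      using direct_sum unfolding direct_sum_def by simp
  qed
  ultimately show ?thesis
    by blast
qed

lemma projection_mem: "proj e \<in> L1" and projection_diff_mem: "e - proj e \<in> L2"
  using theI'[OF projection_ex1] unfolding projection_def by blast+

lemma projection_eqI: "u \<in> L1 \<Longrightarrow> e - u \<in> L2 \<Longrightarrow> proj e = u"
  unfolding projection_def using projection_ex1 by (blast intro: the1_equality)

lemma projection_add: "proj (e + e') = proj e + proj e'"
proof (rule projection_eqI)
  show "proj e + proj e' \<in> L1"
    using submodule1 projection_mem unfolding submodule_def by blast
  have "(e - proj e) + (e' - proj e') \<in> L2"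
    using submodule2 projection_diff_mem unfolding submodule_def by blast
  then show "e + e' - (proj e + proj e') \<in> L2"
    by (simp add: algebra_simps)
qed

lemma projection_smult: "proj (smult f e) = smult f (proj e)"
proof (rule projection_eqI)
  show "smult f (proj e) \<in> L1"
    using submodule1 projection_mem unfolding submodule_def by blast
  have "smult f (e - proj e) \<in> L2"
    using submodule2 projection_diff_mem unfolding submodule_def by blast
  then show "smult f e - smult f (proj e) \<in> L2"
    by (simp add: smult_diff_right)
qed

lemma projection_id: "x \<in> L1 \<Longrightarrow> proj x = x"
  using submodule2 by (intro projection_eqI) (simp_all add: submodule_def)

lemma pair_projection:
  assumes "y \<in> L2"
  shows "pair y (proj e) = pair y e"
proof -
  have "pair y (e - proj e) = 0"
    using dirac_isotropic[OF dirac2 assms projection_diff_mem] .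
  then show ?thesis
    by (simp add: pair_diff_right)
qed

lemma pair_projection_sum: "pair u (proj w) + pair (proj u) w = pair u w"
proof -
  have iso: "pair (proj u) (proj w) = 0" "pair (u - proj u) (w - proj w) = 0"
    using dirac_isotropic[OF dirac1 projection_mem projection_mem]
      dirac_isotropic[OF dirac2 projection_diff_mem projection_diff_mem] .
  have "pair (proj u + (u - proj u)) (proj w) + pair (proj u) (proj w + (w - proj w)) =
      pair (proj u + (u - proj u)) (proj w + (w - proj w))"
    unfolding pair_add_left pair_add_right iso by (simp add: algebra_simps)
  then show ?thesis
    by simp
qed

lemma L1_eqI:
  assumes "u \<in> L1" "v \<in> L1" and "\<And>y. y \<in> L2 \<Longrightarrow> pair y u = pair y v"
  shows "u = v"
proof (rule pair_eqI_right)
  fix z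
  have "pair (proj z) u = 0" "pair (proj z) v = 0"
    using assms(1,2) dirac_isotropic[OF dirac1] projection_mem by blast+
  moreover have "pair (z - proj z) u = pair (z - proj z) v"
    using assms(3) projection_diff_mem by blast
  ultimately show "pair z u = pair z v"
    by (simp add: pair_diff_left)
qed

lemma the_projection: "(THE \<zeta>. \<zeta> \<in> L1 \<and> (\<forall>y\<in>L2. pair y \<zeta> = pair y e)) = proj e"
  by (rule the_equality)
    (auto simp: projection_mem pair_projection intro: L1_eqI[OF _ projection_mem])

lemma pair_represents_L1_functionals:
  assumes \<phi>: "flin_on smult L1 \<phi>"
  shows "\<exists>!\<xi>. \<xi> \<in> L2 \<and> (\<forall>x\<in>L1. pair \<xi> x = \<phi> x)"
proof -
  have "flin_on smult UNIV (\<lambda>e. \<phi> (proj e))"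
    using \<phi> projection_mem unfolding flin_on_def by (simp add: projection_add projection_smult)
  then obtain e where e: "\<And>z. pair e z = \<phi> (proj z)"
    using pair_nondegenerate by blast
  have "pair \<zeta> z = \<phi> (proj z)"
    if "\<zeta> \<in> L2" "\<forall>x\<in>L1. pair \<zeta> x = \<phi> x" for \<zeta> z
  proof -
    have "pair \<zeta> (z - proj z) = 0"
      using dirac_isotropic[OF dirac2] that(1) projection_diff_mem by blast
    then show ?thesis
      using that(2) projection_mem by (simp add: pair_diff_right)
  qed
  moreover have "e - proj e \<in> L2 \<and> (\<forall>x\<in>L1. pair (e - proj e) x = \<phi> x)"
    using e dirac_isotropic[OF dirac1] projection_mem
    by (simp add: projection_diff_mem projection_id pair_diff_left)
  ultimately show ?thesis
    using e by (metis pair_eqI)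
qed

lemma Lstar_eq:
  assumes "\<xi> \<in> L2"
  shows "Lstar L2 star rho L1 (\<lambda>y \<zeta>. pair \<zeta> y) \<xi> x = proj (bracket \<xi> x)"
proof -
  have "rho \<xi> (pair y x) - pair (star \<xi> y) x = pair y (bracket \<xi> x)" if "y \<in> L2" for y
    using rho_pair_isotropic[OF dirac_isotropic[OF dirac2 assms that]] by simp
  then show ?thesis
    unfolding Lstar_def by (simp add: the_projection cong: ball_cong)
qed

lemma adstar_eq: "adstar L2 star rho L1 (\<lambda>y \<zeta>. pair \<zeta> y) \<xi> x = proj (ostar \<xi> x)"
  unfolding adstar_def rho_pair_bracket by (simp add: the_projection)

lemma lieT_delta1:
  assumes "a \<in> L2" "x1 \<in> L1" "x2 \<in> L1"
  shows "lieT L2 star rho L1 (\<lambda>y \<zeta>. pair \<zeta> y) a (delta1 rho star pair b) x1 x2 =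
    rho a (pair (bracket x1 b) x2) - pair (proj (bracket a x1)) (ostar b x2)
      - pair (bracket x1 b) (proj (ostar a x2))"
proof -
  have "delta1 rho star pair b x1 x2 = pair (bracket x1 b) x2"
    using dirac_isotropic[OF dirac1 assms(2,3)] by (rule delta1_isotropic_bracket)
  moreover have "delta1 rho star pair b (proj (bracket a x1)) x2 = pair (proj (bracket a x1)) (ostar b x2)"
    using dirac_isotropic[OF dirac1 projection_mem assms(3)] by (rule delta1_isotropic_ostar)
  moreover have "delta1 rho star pair b x1 (proj (ostar a x2)) = pair (bracket x1 b) (proj (ostar a x2))"
    using dirac_isotropic[OF dirac1 assms(2) projection_mem] by (rule delta1_isotropic_bracket)
  ultimately show ?thesis
    unfolding lieT_def Lstar_eq[OF assms(1)] adstar_eq by simp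
qed

lemma delta1_bracket:
  assumes \<xi>: "\<xi> \<in> L2" and \<eta>: "\<eta> \<in> L2" and x1: "x1 \<in> L1" and x2: "x2 \<in> L1"
  shows "delta1 rho star pair (bracket \<xi> \<eta>) x1 x2 =
    lieT L2 star rho L1 (\<lambda>y \<zeta>. pair \<zeta> y) \<xi> (delta1 rho star pair \<eta>) x1 x2 -
    lieT L2 star rho L1 (\<lambda>y \<zeta>. pair \<zeta> y) \<eta> (delta1 rho star pair \<xi>) x1 x2"
proof -
  have skew: "pair (bracket x y) w = - pair (bracket y x) w" for x y w
    by (simp add: pair_diff_left)
  have "delta1 rho star pair (bracket \<xi> \<eta>) x1 x2 = pair (bracket x1 (bracket \<xi> \<eta>)) x2"
    by (rule delta1_isotropic_bracket) (rule dirac_isotropic[OF dirac1 x1 x2])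
  also have "\<dots> = pair (bracket \<xi> (bracket x1 \<eta>)) x2 - pair (bracket \<eta> (bracket x1 \<xi>)) x2"
    by (simp only: bracket_bracket[of x1 \<xi> \<eta>] pair_diff_left)
  also have "\<dots> = (rho \<xi> (pair (bracket x1 \<eta>) x2) - pair (bracket x1 \<eta>) (ostar \<xi> x2))
      - (rho \<eta> (pair (bracket x1 \<xi>) x2) - pair (bracket x1 \<xi>) (ostar \<eta> x2))"
    by (simp only: rho_pair_bracket add_diff_cancel)
  also have "\<dots> = rho \<xi> (pair (bracket x1 \<eta>) x2) - rho \<eta> (pair (bracket x1 \<xi>) x2)
      + pair (bracket \<eta> x1) (ostar \<xi> x2) - pair (bracket \<xi> x1) (ostar \<eta> x2)"
    by (simp add: skew[of x1] algebra_simps)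
  also have "\<dots> = rho \<xi> (pair (bracket x1 \<eta>) x2) - rho \<eta> (pair (bracket x1 \<xi>) x2)
      + (pair (bracket \<eta> x1) (proj (ostar \<xi> x2)) + pair (proj (bracket \<eta> x1)) (ostar \<xi> x2))
      - (pair (bracket \<xi> x1) (proj (ostar \<eta> x2)) + pair (proj (bracket \<xi> x1)) (ostar \<eta> x2))"
    by (simp only: pair_projection_sum)
  also have "\<dots> = lieT L2 star rho L1 (\<lambda>y \<zeta>. pair \<zeta> y) \<xi> (delta1 rho star pair \<eta>) x1 x2 -
      lieT L2 star rho L1 (\<lambda>y \<zeta>. pair \<zeta> y) \<eta> (delta1 rho star pair \<xi>) x1 x2"
    unfolding lieT_delta1[OF \<xi> x1 x2] lieT_delta1[OF \<eta> x1 x2]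
    by (simp add: skew[of x1] algebra_simps)
  finally show ?thesis .
qed

lemma dual_pairing: "dual_pairing smult L1 L2 pair"
  unfolding dual_pairing_def
proof (intro conjI ballI allI impI)
  interpret flipped: complementary_dirac smult "\<lambda>a b. pair b a" star rho L2 L1
    by (rule complementary_dirac_flip)
  fix \<xi> show "flin_on smult L1 (pair \<xi>)"
    by (simp add: flin_on_def pair_add_right pair_smult_right)
next
  fix x show "flin_on smult L2 (\<lambda>\<xi>. pair \<xi> x)"
    by (simp add: flin_on_def pair_add_left pair_smult_left)
next
  fix \<phi> assume "flin_on smult L1 \<phi>"
  then show "\<exists>!\<xi>. \<xi> \<in> L2 \<and> (\<forall>x\<in>L1. pair \<xi> x = \<phi> x)"
    by (rule pair_represents_L1_functionals)
next
  interpret flipped: complementary_dirac smult "\<lambda>a b. pair b a" star rho L2 L1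
    by (rule complementary_dirac_flip)
  fix \<psi> assume "flin_on smult L2 \<psi>"
  then show "\<exists>!x. x \<in> L1 \<and> (\<forall>\<xi>\<in>L2. pair \<xi> x = \<psi> \<xi>)"
    by (rule flipped.pair_represents_L1_functionals)
qed

lemma ls_bialgebroid: "ls_bialgebroid smult L1 star rho L2 star rho pair"
proof -
  interpret flipped: complementary_dirac smult "\<lambda>a b. pair b a" star rho L2 L1
    by (rule complementary_dirac_flip)
  show ?thesis
    unfolding ls_bialgebroid_def
    using dirac_left_symmetric_algebroid[OF dirac1] dirac_left_symmetric_algebroid[OF dirac2]
      dual_pairing delta1_bracket flipped.delta1_bracket
    by simp
qed

end

theorem mainTheorem12:
  fixes smult :: "'f::{comm_ring_1,real_algebra_1} \<Rightarrow> 'e::ab_group_add \<Rightarrow> 'e"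
    and pair :: "'e \<Rightarrow> 'e \<Rightarrow> 'f"
    and star :: "'e \<Rightarrow> 'e \<Rightarrow> 'e"
    and rho :: "'e \<Rightarrow> 'f \<Rightarrow> 'f"
    and L1 L2 :: "'e set"
  assumes "pre_symplectic_algebroid smult pair star rho"
    and "dirac_structure smult pair star L1"
    and "dirac_structure smult pair star L2"
    and "direct_sum L1 L2"
  shows "left_symmetric_algebroid smult L1 star rho \<and>
         left_symmetric_algebroid smult L2 star rho \<and>
         ls_bialgebroid smult L1 star rho L2 star rho pair"
proof -
  interpret complementary_dirac smult pair star rho L1 L2
    using assms by (simp add: complementary_dirac_def complementary_dirac_axioms_def pre_symplectic_def)
  show ?thesis
    using dirac_left_symmetric_algebroid[OF dirac1] dirac_left_symmetric_algebroid[OF dirac2]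
      ls_bialgebroid by blast
qed

end
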